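(* Let $\mathcal{A}\subseteq\mathbb{R}^3$, $K\ge2$, $P_1,\ldots,P_K>0$, $\sigma^2>0$, and $h_1,\ldots,h_K\in L^2(\mathcal{A})$ with positive definite Gram matrix $\mathbf{R}$, $[\mathbf{R}]_{k_1,k_2}=\int_{\mathcal{A}}h_{k_1}^{*}h_{k_2}\,\mathrm{d}\mathbf{r}$. Fix $k$, let $\mathbf{h}_{\setminus k}(\mathbf{r})=[h_{k'}(\mathbf{r})]_{k'\neq k}\in\mathbb{C}^{1\times(K-1)}$, $\mathbf{R}_k=\int_{\mathcal{A}}\mathbf{h}_{\setminus k}^{\mathsf{H}}\mathbf{h}_{\setminus k}\,\mathrm{d}\mathbf{r}$, $\mathbf{P}_k=\mathrm{diag}(P_{k'}/\sigma^2)_{k'\neq k}$, and $\mathbf{C}_k=\mathbf{P}_k^{1/2}\mathbf{R}_k\mathbf{P}_k^{1/2}$ with eigendecomposition $\mathbf{C}_k=\mathbf{U}_k\,\mathrm{diag}(\lambda_{k'})_{k'\neq k}\mathbf{U}_k^{\mathsf{H}}$, $\lambda_{k'}>0$. Let $\mathbf{B}_k=\mathbf{U}_k\,\mathrm{diag}\big(\tfrac{1+\sqrt{1+\lambda_{k'}}}{\lambda_{k'}}\big)\mathbf{U}_k^{\mathsf{H}}$ and let $B_k$ be the operator on $L^2(\mathcal{A})$ with kernel $\delta(\mathbf{r}-\mathbf{r}')-\mathbf{h}_{\setminus k}(\mathbf{r})\mathbf{P}_k^{1/2}\mathbf{B}_k\mathbf{P}_k^{1/2}\mathbf{h}_{\setminus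 k}^{\mathsf{H}}(\mathbf{r}')$. For $w_k\in L^2(\mathcal{A})$ define $$f_{\mathsf{dm}}(w_k)=\iint_{\mathcal{A}^2}w_k^{*}(\mathbf{r})C_k(\mathbf{r},\mathbf{r}')w_k(\mathbf{r}')\,\mathrm{d}\mathbf{r}'\mathrm{d}\mathbf{r},\qquad C_k(\mathbf{r},\mathbf{r}')=\delta(\mathbf{r}-\mathbf{r}')+\sum_{k'\neq k}\frac{P_{k'}}{\sigma^2}h_{k'}(\mathbf{r})h_{k'}^{*}(\mathbf{r}'),$$ that is, $f_{\mathsf{dm}}(w_k)=\int_{\mathcal{A}}|w_k|^2\,\mathrm{d}\mathbf{r}+\sum_{k'\neq k}\frac{P_{k'}}{\sigma^2}\big|\int_{\mathcal{A}}h_{k'}^*w_k\,\mathrm{d}\mathbf{r}\big|^2$, and let $u_k(\mathbf{r})=\int_{\mathcal{A}}B_k(\mathbf{r},\mathbf{r}')w_k(\mathbf{r}')\,\mathrm{d}\mathbf{r}'$. Then $f_{\mathsf{dm}}(w_k)=\int_{\mathcal{A}}|u_k(\mathbf{r})|^2\,\mathrm{d}\mathbf{r}$.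
   Context: Kernels containing $\delta(\mathbf{r}-\mathbf{r}')$ denote the identity plus a finite-rank integral operator. Standing assumption: channel responses pairwise non-parallel and $\mathbf{R}$ positive definite. *)

theory Defs
  imports "HOL-Analysis.Analysis"
begin

text \<open>Points of the aperture region are in R^3; functions are complex-valued on A.
  Channel indices are 1..K; for fixed k the index set of the others is {1..K} - {k}.\<close>

type_synonym pt = "real ^ 3"

definition L2 :: "pt set \<Rightarrow> (pt \<Rightarrow> complex) \<Rightarrow> bool" where
  "L2 A f \<longleftrightarrow> f \<in> borel_measurable (lebesgue_on A) \<and>
                integrable (lebesgue_on A) (\<lambda>r. (cmod (f r))\<^sup>2)"

definition ip :: "pt set \<Rightarrow> (pt \<Rightarrow> complex) \<Rightarrow> (pt \<Rightarrow> complex) \<Rightarrow> complex" where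
  "ip A f g = (LINT r|lebesgue_on A. cnj (f r) * g r)"

definition gram :: "pt set \<Rightarrow> (nat \<Rightarrow> pt \<Rightarrow> complex) \<Rightarrow> nat \<Rightarrow> nat \<Rightarrow> complex" where
  "gram A h i j = ip A (h i) (h j)"

definition pos_def_on :: "nat set \<Rightarrow> (nat \<Rightarrow> nat \<Rightarrow> complex) \<Rightarrow> bool" where
  "pos_def_on I M \<longleftrightarrow> (\<forall>x::nat \<Rightarrow> complex. (\<exists>i\<in>I. x i \<noteq> 0) \<longrightarrow>
      (let q = (\<Sum>i\<in>I. \<Sum>j\<in>I. cnj (x i) * M i j * x j) in Im q = 0 \<and> Re q > 0))"

definition unitary_on :: "nat set \<Rightarrow> (nat \<Rightarrow> nat \<Rightarrow> complex) \<Rightarrow> bool" where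
  "unitary_on I U \<longleftrightarrow> (\<forall>i\<in>I. \<forall>j\<in>I. (\<Sum>l\<in>I. cnj (U l i) * U l j) = (if i = j then 1 else 0))"

definition Rk :: "pt set \<Rightarrow> (nat \<Rightarrow> pt \<Rightarrow> complex) \<Rightarrow> nat \<Rightarrow> nat \<Rightarrow> complex" where
  "Rk A h i j = (LINT r|lebesgue_on A. cnj (h i r) * h j r)"

definition Ck :: "pt set \<Rightarrow> (nat \<Rightarrow> pt \<Rightarrow> complex) \<Rightarrow> (nat \<Rightarrow> real) \<Rightarrow> real \<Rightarrow> nat \<Rightarrow> nat \<Rightarrow> complex" where
  "Ck A h P \<sigma>2 i j = complex_of_real (sqrt (P i / \<sigma>2)) * Rk A h i j * complex_of_real (sqrt (P j / \<sigma>2))"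

definition Bk :: "nat set \<Rightarrow> (nat \<Rightarrow> nat \<Rightarrow> complex) \<Rightarrow> (nat \<Rightarrow> real) \<Rightarrow> nat \<Rightarrow> nat \<Rightarrow> complex" where
  "Bk I U lam i j = (\<Sum>l\<in>I. U i l * complex_of_real ((1 + sqrt (1 + lam l)) / lam l) * cnj (U j l))"

definition apply_Bop :: "pt set \<Rightarrow> nat set \<Rightarrow> (nat \<Rightarrow> pt \<Rightarrow> complex) \<Rightarrow> (nat \<Rightarrow> real) \<Rightarrow> real
     \<Rightarrow> (nat \<Rightarrow> nat \<Rightarrow> complex) \<Rightarrow> (pt \<Rightarrow> complex) \<Rightarrow> pt \<Rightarrow> complex" where
  "apply_Bop A I h P \<sigma>2 B w r = w r -
     (\<Sum>i\<in>I. \<Sum>j\<in>I. h i r * complex_of_real (sqrt (P i / \<sigma>2)) * B i j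
        * complex_of_real (sqrt (P j / \<sigma>2)) * (LINT r'|lebesgue_on A. cnj (h j r') * w r'))"

definition f_dm :: "pt set \<Rightarrow> nat set \<Rightarrow> (nat \<Rightarrow> pt \<Rightarrow> complex) \<Rightarrow> (nat \<Rightarrow> real) \<Rightarrow> real
     \<Rightarrow> (pt \<Rightarrow> complex) \<Rightarrow> real" where
  "f_dm A I h P \<sigma>2 w = (LINT r|lebesgue_on A. (cmod (w r))\<^sup>2)
     + (\<Sum>i\<in>I. P i / \<sigma>2 * (cmod (LINT r|lebesgue_on A. cnj (h i r) * w r))\<^sup>2)"

end

theory Submission imports Defs begin

text \<open>With g = P_k^{1/2} int h^H w and c = B_k g, the operator B_k maps w to
  u = w - h P_k^{1/2} c, so expanding the square gives
  int |u|^2 = int |w|^2 - 2 Re (c^H g) + c^H C_k c.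
  Since B_k is Hermitian and commutes with C_k, the claim reduces to the matrix identity
  B_k C_k B_k - 2 B_k = 1, which in the eigenbasis of C_k says that each eigenvalue
  d = (1 + sqrt (1 + lambda)) / lambda of B_k is a root of lambda d^2 - 2 d - 1.\<close>

lemma L2_integrable_cnj_mult:
  assumes "L2 A f" "L2 A g"
  shows "integrable (lebesgue_on A) (\<lambda>r. cnj (f r) * g r)"
proof (rule Bochner_Integration.integrable_bound)
  show "integrable (lebesgue_on A) (\<lambda>r. (cmod (f r))\<^sup>2 + (cmod (g r))\<^sup>2)"
    using assms unfolding L2_def by auto
  have "(\<lambda>r. cnj (f r)) \<in> borel_measurable (lebesgue_on A)"
    using assms(1) unfolding L2_def
    by (intro borel_measurable_continuous_on[where f = cnj]) (auto intro: continuous_intros)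
  then show "(\<lambda>r. cnj (f r) * g r) \<in> borel_measurable (lebesgue_on A)"
    using assms(2) unfolding L2_def by (auto intro: borel_measurable_times)
  show "AE r in lebesgue_on A. norm (cnj (f r) * g r) \<le> norm ((cmod (f r))\<^sup>2 + (cmod (g r))\<^sup>2)"
  proof (rule AE_I2)
    fix r
    have "0 \<le> (cmod (f r) - cmod (g r))\<^sup>2" by simp
    then have "cmod (f r) * cmod (g r) \<le> (cmod (f r))\<^sup>2 + (cmod (g r))\<^sup>2"
      unfolding power2_diff using zero_le_power2[of "cmod (f r)"] zero_le_power2[of "cmod (g r)"]
      by linarith
    then show "norm (cnj (f r) * g r) \<le> norm ((cmod (f r))\<^sup>2 + (cmod (g r))\<^sup>2)"
      by (simp add: norm_mult)
  qed
qed

lemma integral_cmod_square: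
  "complex_of_real (LINT r|lebesgue_on A. (cmod (u r))\<^sup>2) = (LINT r|lebesgue_on A. cnj (u r) * u r)"
proof -
  have "(\<lambda>r. cnj (u r) * u r) = (\<lambda>r. complex_of_real ((cmod (u r))\<^sup>2))"
    by (metis complex_norm_square mult.commute)
  then show ?thesis by (simp only: integral_complex_of_real)
qed

lemma integral_cmod_diff_sum_square:
  assumes "finite I" and h: "\<And>i. i \<in> I \<Longrightarrow> L2 A (h i)" and w: "L2 A w"
  defines "L \<equiv> \<lambda>i. LINT r|lebesgue_on A. cnj (h i r) * w r"
  shows "complex_of_real (LINT r|lebesgue_on A. (cmod (w r - (\<Sum>i\<in>I. x i * h i r)))\<^sup>2)
       = complex_of_real (LINT r|lebesgue_on A. (cmod (w r))\<^sup>2)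
         - (\<Sum>j\<in>I. x j * cnj (L j)) - (\<Sum>i\<in>I. cnj (x i) * L i)
         + (\<Sum>i\<in>I. \<Sum>j\<in>I. cnj (x i) * x j * (LINT r|lebesgue_on A. cnj (h i r) * h j r))"
proof -
  have int_ww: "integrable (lebesgue_on A) (\<lambda>r. cnj (w r) * w r)"
    and int_wh: "\<And>i. i \<in> I \<Longrightarrow> integrable (lebesgue_on A) (\<lambda>r. cnj (w r) * h i r)"
    and int_hw: "\<And>i. i \<in> I \<Longrightarrow> integrable (lebesgue_on A) (\<lambda>r. cnj (h i r) * w r)"
    and int_hh: "\<And>i j. i \<in> I \<Longrightarrow> j \<in> I \<Longrightarrow> integrable (lebesgue_on A) (\<lambda>r. cnj (h i r) * h j r)"
    using L2_integrable_cnj_mult h w by blast+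
  have cnj_L: "(LINT r|lebesgue_on A. cnj (w r) * h i r) = cnj (L i)" for i
  proof -
    have "(\<lambda>r. cnj (w r) * h i r) = (\<lambda>r. cnj (cnj (h i r) * w r))" by (simp add: mult.commute)
    then show ?thesis unfolding L_def by (simp only: Bochner_Integration.integral_cnj)
  qed
  have "(\<lambda>r. cnj (w r - (\<Sum>i\<in>I. x i * h i r)) * (w r - (\<Sum>i\<in>I. x i * h i r)))
      = (\<lambda>r. cnj (w r) * w r - (\<Sum>j\<in>I. x j * (cnj (w r) * h j r))
             - (\<Sum>i\<in>I. cnj (x i) * (cnj (h i r) * w r))
             + (\<Sum>i\<in>I. \<Sum>j\<in>I. cnj (x i) * x j * (cnj (h i r) * h j r)))"
    by (simp add: cnj_sum sum_product algebra_simps sum_distrib_left)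
  then show ?thesis
    using int_ww int_wh int_hw int_hh
    by (simp add: integral_cmod_square integrable_sum integral_sum cnj_L L_def)
qed

lemma sum_mult_sum_swap:
  fixes a v :: "'a \<Rightarrow> 'b::comm_semiring_0"
  shows "(\<Sum>j\<in>I. (\<Sum>m\<in>I. a m * b j m) * v j) = (\<Sum>m\<in>I. a m * (\<Sum>j\<in>I. b j m * v j))"
  by (simp add: sum_distrib_left sum_distrib_right mult.assoc) (rule sum.swap)

lemma unitary_on_adjoint_apply:
  assumes "finite I" and "unitary_on I U" and "m \<in> I"
  shows "(\<Sum>i\<in>I. cnj (U i m) * (\<Sum>l\<in>I. U i l * x l)) = x m"
proof -
  have "(\<Sum>i\<in>I. cnj (U i m) * (\<Sum>l\<in>I. U i l * x l)) = (\<Sum>l\<in>I. (\<Sum>i\<in>I. cnj (U i m) * U i l) * x l)"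
    by (rule sum_mult_sum_swap[symmetric])
  also have "\<dots> = (\<Sum>l\<in>I. if m = l then x l else 0)"
    using assms unfolding unitary_on_def by (intro sum.cong refl) auto
  finally show ?thesis using assms by simp
qed

lemma unitary_on_inner:
  assumes "finite I" and "unitary_on I U"
    and a: "\<And>i. i \<in> I \<Longrightarrow> a i = (\<Sum>l\<in>I. U i l * x l)"
    and b: "\<And>i. i \<in> I \<Longrightarrow> b i = (\<Sum>l\<in>I. U i l * y l)"
  shows "(\<Sum>i\<in>I. cnj (a i) * b i) = (\<Sum>l\<in>I. cnj (x l) * y l)"
proof -
  have "(\<Sum>i\<in>I. cnj (a i) * b i) = (\<Sum>i\<in>I. cnj (\<Sum>l\<in>I. U i l * x l) * (\<Sum>l\<in>I. U i l * y l))"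
    by (intro sum.cong refl) (simp only: a b)
  also have "\<dots> = (\<Sum>l\<in>I. cnj (x l) * (\<Sum>i\<in>I. cnj (U i l) * (\<Sum>m\<in>I. U i m * y m)))"
    using sum_mult_sum_swap[of "\<lambda>l. cnj (x l)" "\<lambda>i l. cnj (U i l)" I "\<lambda>i. \<Sum>m\<in>I. U i m * y m"]
    by (simp add: cnj_sum mult.commute)
  also have "\<dots> = (\<Sum>l\<in>I. cnj (x l) * y l)"
    using unitary_on_adjoint_apply[OF assms(1,2)] by simp
  finally show ?thesis .
qed

lemma diagonalised_apply:
  fixes M U :: "nat \<Rightarrow> nat \<Rightarrow> complex"
  assumes "\<And>i j. i \<in> I \<Longrightarrow> j \<in> I \<Longrightarrow> M i j = (\<Sum>l\<in>I. U i l * \<mu> l * cnj (U j l))" and "i \<in> I"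
  shows "(\<Sum>j\<in>I. M i j * x j) = (\<Sum>l\<in>I. U i l * (\<mu> l * (\<Sum>j\<in>I. cnj (U j l) * x j)))"
  using assms sum_mult_sum_swap[of "\<lambda>l. U i l * \<mu> l" "\<lambda>j l. cnj (U j l)" I x]
  by (simp add: mult.assoc)

lemma unitary_diagonalised_apply:
  fixes M U :: "nat \<Rightarrow> nat \<Rightarrow> complex"
  assumes "finite I" and "unitary_on I U"
    and "\<And>i j. i \<in> I \<Longrightarrow> j \<in> I \<Longrightarrow> M i j = (\<Sum>l\<in>I. U i l * \<mu> l * cnj (U j l))" and "i \<in> I"
  shows "(\<Sum>j\<in>I. M i j * (\<Sum>l\<in>I. U j l * x l)) = (\<Sum>l\<in>I. U i l * (\<mu> l * x l))"
  using diagonalised_apply[of I M U \<mu>, OF assms(3,4)] unitary_on_adjoint_apply[OF assms(1,2)]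
  by simp

text \<open>Only U^H U = 1 is assumed; U U^H = 1 follows because U diag(\<mu>) U^H annihilates
  g - U U^H g, which therefore vanishes by positive definiteness.\<close>
lemma unitary_on_complete:
  fixes M U :: "nat \<Rightarrow> nat \<Rightarrow> complex"
  assumes fin: "finite I" and U: "unitary_on I U"
    and eig: "\<And>i j. i \<in> I \<Longrightarrow> j \<in> I \<Longrightarrow> M i j = (\<Sum>l\<in>I. U i l * \<mu> l * cnj (U j l))"
    and pd: "pos_def_on I M" and "i \<in> I"
  shows "(\<Sum>l\<in>I. U i l * (\<Sum>j\<in>I. cnj (U j l) * g j)) = g i"
proof -
  define z where "z = (\<lambda>i. g i - (\<Sum>l\<in>I. U i l * (\<Sum>j\<in>I. cnj (U j l) * g j)))"
  have "(\<Sum>j\<in>I. cnj (U j l) * z j) = 0" if "l \<in> I" for l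
    using unitary_on_adjoint_apply[OF fin U that]
    by (simp add: z_def right_diff_distrib sum_subtractf)
  then have Mz: "(\<Sum>j\<in>I. M i j * z j) = 0" if "i \<in> I" for i
    using diagonalised_apply[of I M U \<mu>, OF eig that] by simp
  have "(\<Sum>i\<in>I. \<Sum>j\<in>I. cnj (z i) * M i j * z j) = (\<Sum>i\<in>I. cnj (z i) * (\<Sum>j\<in>I. M i j * z j))"
    by (simp add: sum_distrib_left mult.assoc)
  also have "\<dots> = 0" using Mz by simp
  finally have quad: "(\<Sum>i\<in>I. \<Sum>j\<in>I. cnj (z i) * M i j * z j) = 0" .
  have "z i = 0"
  proof (rule ccontr)
    assume "z i \<noteq> 0"
    then have "Re (\<Sum>i\<in>I. \<Sum>j\<in>I. cnj (z i) * M i j * z j) > 0"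
      using pd \<open>i \<in> I\<close> unfolding pos_def_on_def Let_def by blast
    with quad show False by simp
  qed
  then show ?thesis unfolding z_def by simp
qed

lemma pos_def_on_scaled_submatrix:
  assumes "pos_def_on J M" and "finite J" and "I \<subseteq> J" and "\<And>i. i \<in> I \<Longrightarrow> s i \<noteq> 0"
  shows "pos_def_on I (\<lambda>i j. complex_of_real (s i) * M i j * complex_of_real (s j))"
  unfolding pos_def_on_def Let_def
proof (intro allI impI)
  fix z :: "nat \<Rightarrow> complex"
  assume "\<exists>i\<in>I. z i \<noteq> 0"
  define x where "x = (\<lambda>i. if i \<in> I then complex_of_real (s i) * z i else 0)"
  have "\<exists>i\<in>J. x i \<noteq> 0"
    using \<open>\<exists>i\<in>I. z i \<noteq> 0\<close> assms(3,4) unfolding x_def by force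
  then have pos: "Im (\<Sum>i\<in>J. \<Sum>j\<in>J. cnj (x i) * M i j * x j) = 0
      \<and> Re (\<Sum>i\<in>J. \<Sum>j\<in>J. cnj (x i) * M i j * x j) > 0"
    using assms(1) unfolding pos_def_on_def Let_def by blast
  have "(\<Sum>i\<in>J. \<Sum>j\<in>J. cnj (x i) * M i j * x j) = (\<Sum>i\<in>I. \<Sum>j\<in>J. cnj (x i) * M i j * x j)"
    using assms(2,3) by (intro sum.mono_neutral_right) (auto simp: x_def)
  also have "\<dots> = (\<Sum>i\<in>I. \<Sum>j\<in>I. cnj (x i) * M i j * x j)"
    using assms(2,3) by (intro sum.cong refl sum.mono_neutral_right) (auto simp: x_def)
  also have "\<dots> = (\<Sum>i\<in>I. \<Sum>j\<in>I. cnj (z i) * (complex_of_real (s i) * M i j * complex_of_real (s j)) * z j)"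
    by (intro sum.cong refl) (simp add: x_def mult_ac)
  finally show "Im (\<Sum>i\<in>I. \<Sum>j\<in>I. cnj (z i) * (complex_of_real (s i) * M i j * complex_of_real (s j)) * z j) = 0
    \<and> 0 < Re (\<Sum>i\<in>I. \<Sum>j\<in>I. cnj (z i) * (complex_of_real (s i) * M i j * complex_of_real (s j)) * z j)"
    using pos by simp
qed

lemma pos_def_on_Ck:
  assumes "pos_def_on J (gram A h)" and "finite J" and "I \<subseteq> J"
    and "\<And>i. i \<in> I \<Longrightarrow> P i / \<sigma>2 > 0"
  shows "pos_def_on I (Ck A h P \<sigma>2)"
proof -
  have "Ck A h P \<sigma>2 = (\<lambda>i j. complex_of_real (sqrt (P i / \<sigma>2)) * gram A h i j
      * complex_of_real (sqrt (P j / \<sigma>2)))"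
    by (intro ext) (simp add: Ck_def Rk_def gram_def ip_def)
  moreover have "sqrt (P i / \<sigma>2) \<noteq> 0" if "i \<in> I" for i
    using real_sqrt_gt_zero[OF assms(4)[OF that]] by linarith
  ultimately show ?thesis
    using pos_def_on_scaled_submatrix[OF assms(1-3)] by presburger
qed

lemma Bk_eigenvalue_eq:
  fixes l :: real
  assumes "l > 0"
  shows "l * ((1 + sqrt (1 + l)) / l)\<^sup>2 - 2 * ((1 + sqrt (1 + l)) / l) = 1"
proof -
  define s where "s = sqrt (1 + l)"
  have "s\<^sup>2 = 1 + l" unfolding s_def using assms by simp
  then have "(1 + s)\<^sup>2 - 2 * (1 + s) = l" by (simp add: power2_eq_square algebra_simps)
  moreover have "l * ((1 + s) / l)\<^sup>2 - 2 * ((1 + s) / l) = ((1 + s)\<^sup>2 - 2 * (1 + s)) / l"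
    using assms by (simp add: field_simps power2_eq_square)
  ultimately show ?thesis using assms unfolding s_def by simp
qed

lemma Bk_eigenvalue_quadratic_form:
  fixes l :: real and y :: complex
  assumes "l > 0"
  defines "d \<equiv> complex_of_real ((1 + sqrt (1 + l)) / l)"
  shows "cnj y * y = - (cnj y * (d * y)) - cnj (d * y) * y + cnj (d * y) * (complex_of_real l * (d * y))"
proof -
  have expand: "- (b * (e * a)) - (e * b) * a + (e * b) * (m * (e * a)) = b * a * (m * e\<^sup>2 - 2 * e)"
    for a b e m :: complex
    by (simp add: algebra_simps power2_eq_square)
  have "cnj (d * y) = d * cnj y" unfolding d_def by simp
  then have "- (cnj y * (d * y)) - cnj (d * y) * y + cnj (d * y) * (complex_of_real l * (d * y))
      = cnj y * y * (complex_of_real l * d\<^sup>2 - 2 * d)"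
    by (simp only: expand)
  also have "complex_of_real l * d\<^sup>2 - 2 * d = 1"
    using arg_cong[OF Bk_eigenvalue_eq[OF assms(1)], of complex_of_real]
    unfolding d_def of_real_diff of_real_mult of_real_power of_real_numeral of_real_1 .
  finally show ?thesis by simp
qed

lemma Bk_quadratic_identity:
  fixes C U :: "nat \<Rightarrow> nat \<Rightarrow> complex" and g :: "nat \<Rightarrow> complex"
  assumes fin: "finite I" and U: "unitary_on I U"
    and eig: "\<And>i j. i \<in> I \<Longrightarrow> j \<in> I \<Longrightarrow> C i j = (\<Sum>l\<in>I. U i l * complex_of_real (lam l) * cnj (U j l))"
    and pd: "pos_def_on I C" and lpos: "\<And>l. l \<in> I \<Longrightarrow> lam l > 0"
  defines "c \<equiv> \<lambda>i. \<Sum>j\<in>I. Bk I U lam i j * g j"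
  shows "- (\<Sum>j\<in>I. c j * cnj (g j)) - (\<Sum>i\<in>I. cnj (c i) * g i) + (\<Sum>i\<in>I. \<Sum>j\<in>I. cnj (c i) * C i j * c j)
       = (\<Sum>i\<in>I. cnj (g i) * g i)"
proof -
  define y where "y = (\<lambda>l. \<Sum>j\<in>I. cnj (U j l) * g j)"
  define d where "d = (\<lambda>l. complex_of_real ((1 + sqrt (1 + lam l)) / lam l))"
  have g: "g i = (\<Sum>l\<in>I. U i l * y l)" if "i \<in> I" for i
    using unitary_on_complete[of I U C, OF fin U eig pd that] unfolding y_def by simp
  have c: "c i = (\<Sum>l\<in>I. U i l * (d l * y l))" if "i \<in> I" for i
    using diagonalised_apply[of I "Bk I U lam" U d, OF _ that] unfolding c_def y_def d_def Bk_def
    by blast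
  have Cc: "(\<Sum>j\<in>I. C i j * c j) = (\<Sum>l\<in>I. U i l * (complex_of_real (lam l) * (d l * y l)))"
    if "i \<in> I" for i
    using unitary_diagonalised_apply[of I U C, OF fin U eig that] c by (simp cong: sum.cong)
  have "(\<Sum>j\<in>I. c j * cnj (g j)) = (\<Sum>j\<in>I. cnj (g j) * c j)"
    by (rule sum.cong[OF refl]) (rule mult.commute)
  also have "\<dots> = (\<Sum>l\<in>I. cnj (y l) * (d l * y l))"
    by (rule unitary_on_inner[OF fin U g c])
  finally have gc: "(\<Sum>j\<in>I. c j * cnj (g j)) = (\<Sum>l\<in>I. cnj (y l) * (d l * y l))" .
  have "(\<Sum>i\<in>I. \<Sum>j\<in>I. cnj (c i) * C i j * c j) = (\<Sum>i\<in>I. cnj (c i) * (\<Sum>j\<in>I. C i j * c j))"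
    by (simp add: sum_distrib_left mult.assoc)
  also have "\<dots> = (\<Sum>l\<in>I. cnj (d l * y l) * (complex_of_real (lam l) * (d l * y l)))"
    by (rule unitary_on_inner[OF fin U c Cc])
  finally have cCc: "(\<Sum>i\<in>I. \<Sum>j\<in>I. cnj (c i) * C i j * c j)
      = (\<Sum>l\<in>I. cnj (d l * y l) * (complex_of_real (lam l) * (d l * y l)))" .
  have "(\<Sum>l\<in>I. cnj (y l) * y l) = (\<Sum>l\<in>I. - (cnj (y l) * (d l * y l)) - cnj (d l * y l) * y l
      + cnj (d l * y l) * (complex_of_real (lam l) * (d l * y l)))"
    using Bk_eigenvalue_quadratic_form[OF lpos] unfolding d_def by (intro sum.cong refl) blast
  moreover have "(\<Sum>i\<in>I. cnj (g i) * g i) = (\<Sum>l\<in>I. cnj (y l) * y l)"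
    by (rule unitary_on_inner[OF fin U g g])
  moreover have "(\<Sum>i\<in>I. cnj (c i) * g i) = (\<Sum>l\<in>I. cnj (d l * y l) * y l)"
    by (rule unitary_on_inner[OF fin U c g])
  ultimately show ?thesis
    unfolding gc cCc by (simp only: sum.distrib sum_subtractf sum_negf)
qed

definition scaled_proj :: "pt set \<Rightarrow> (nat \<Rightarrow> pt \<Rightarrow> complex) \<Rightarrow> (nat \<Rightarrow> real) \<Rightarrow> real
     \<Rightarrow> (pt \<Rightarrow> complex) \<Rightarrow> nat \<Rightarrow> complex" where
  "scaled_proj A h P \<sigma>2 w i =
     complex_of_real (sqrt (P i / \<sigma>2)) * (LINT r|lebesgue_on A. cnj (h i r) * w r)"

lemma f_dm_eq_scaled_proj:
  assumes "\<And>i. i \<in> I \<Longrightarrow> P i / \<sigma>2 \<ge> 0"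
  shows "complex_of_real (f_dm A I h P \<sigma>2 w)
       = complex_of_real (LINT r|lebesgue_on A. (cmod (w r))\<^sup>2)
         + (\<Sum>i\<in>I. cnj (scaled_proj A h P \<sigma>2 w i) * scaled_proj A h P \<sigma>2 w i)"
proof -
  have "complex_of_real (P i / \<sigma>2 * (cmod (LINT r|lebesgue_on A. cnj (h i r) * w r))\<^sup>2)
      = cnj (scaled_proj A h P \<sigma>2 w i) * scaled_proj A h P \<sigma>2 w i" if "i \<in> I" for i
  proof -
    let ?L = "LINT r|lebesgue_on A. cnj (h i r) * w r"
    have sq: "sqrt (P i / \<sigma>2) * sqrt (P i / \<sigma>2) = P i / \<sigma>2"
      using assms[OF that] by (metis abs_of_nonneg real_sqrt_mult_self)
    have "complex_of_real (P i / \<sigma>2)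
        = complex_of_real (sqrt (P i / \<sigma>2)) * complex_of_real (sqrt (P i / \<sigma>2))"
      unfolding of_real_mult[symmetric] sq by (rule refl)
    moreover have "complex_of_real ((cmod ?L)\<^sup>2) = cnj ?L * ?L"
      unfolding complex_norm_square by (rule mult.commute)
    ultimately show ?thesis
      unfolding scaled_proj_def of_real_mult by (simp add: mult_ac)
  qed
  then show ?thesis unfolding f_dm_def by (simp cong: sum.cong)
qed

lemma apply_Bop_eq_diff_sum:
  "apply_Bop A I h P \<sigma>2 B w r = w r - (\<Sum>i\<in>I.
     (complex_of_real (sqrt (P i / \<sigma>2)) * (\<Sum>j\<in>I. B i j * scaled_proj A h P \<sigma>2 w j)) * h i r)"
  unfolding apply_Bop_def scaled_proj_def by (simp add: sum_distrib_left mult_ac)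

lemma integral_cmod_apply_Bop_square:
  fixes P :: "nat \<Rightarrow> real" and \<sigma>2 :: real and B :: "nat \<Rightarrow> nat \<Rightarrow> complex"
  assumes "finite I" and "\<And>i. i \<in> I \<Longrightarrow> L2 A (h i)" and "L2 A w"
  defines "g \<equiv> scaled_proj A h P \<sigma>2 w"
  defines "c \<equiv> \<lambda>i. \<Sum>j\<in>I. B i j * g j"
  shows "complex_of_real (LINT r|lebesgue_on A. (cmod (apply_Bop A I h P \<sigma>2 B w r))\<^sup>2)
       = complex_of_real (LINT r|lebesgue_on A. (cmod (w r))\<^sup>2)
         - (\<Sum>j\<in>I. c j * cnj (g j)) - (\<Sum>i\<in>I. cnj (c i) * g i)
         + (\<Sum>i\<in>I. \<Sum>j\<in>I. cnj (c i) * Ck A h P \<sigma>2 i j * c j)"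
proof -
  let ?s = "\<lambda>i. complex_of_real (sqrt (P i / \<sigma>2))"
  let ?L = "\<lambda>i. LINT r|lebesgue_on A. cnj (h i r) * w r"
  have "complex_of_real (LINT r|lebesgue_on A. (cmod (apply_Bop A I h P \<sigma>2 B w r))\<^sup>2)
      = complex_of_real (LINT r|lebesgue_on A. (cmod (w r))\<^sup>2)
        - (\<Sum>j\<in>I. ?s j * c j * cnj (?L j)) - (\<Sum>i\<in>I. cnj (?s i * c i) * ?L i)
        + (\<Sum>i\<in>I. \<Sum>j\<in>I. cnj (?s i * c i) * (?s j * c j) * (LINT r|lebesgue_on A. cnj (h i r) * h j r))"
    unfolding apply_Bop_eq_diff_sum c_def g_def by (rule integral_cmod_diff_sum_square[OF assms(1-3)])
  also have "(\<Sum>j\<in>I. ?s j * c j * cnj (?L j)) = (\<Sum>j\<in>I. c j * cnj (g j))"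
    unfolding g_def scaled_proj_def by (simp add: mult_ac)
  also have "(\<Sum>i\<in>I. cnj (?s i * c i) * ?L i) = (\<Sum>i\<in>I. cnj (c i) * g i)"
    unfolding g_def scaled_proj_def by (simp add: mult_ac)
  also have "(\<Sum>i\<in>I. \<Sum>j\<in>I. cnj (?s i * c i) * (?s j * c j) * (LINT r|lebesgue_on A. cnj (h i r) * h j r))
      = (\<Sum>i\<in>I. \<Sum>j\<in>I. cnj (c i) * Ck A h P \<sigma>2 i j * c j)"
    unfolding Ck_def Rk_def by (simp add: mult_ac)
  finally show ?thesis .
qed

theorem lemma9:
  fixes A :: "pt set" and K k :: nat and P :: "nat \<Rightarrow> real" and \<sigma>2 :: real
    and h :: "nat \<Rightarrow> pt \<Rightarrow> complex" and U :: "nat \<Rightarrow> nat \<Rightarrow> complex"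
    and lam :: "nat \<Rightarrow> real" and w :: "pt \<Rightarrow> complex"
  assumes A_meas: "A \<in> sets lebesgue"
    and K2: "K \<ge> 2"
    and Ppos: "\<And>i. i \<in> {1..K} \<Longrightarrow> P i > 0"
    and sigma: "\<sigma>2 > 0"
    and hL2: "\<And>i. i \<in> {1..K} \<Longrightarrow> L2 A (h i)"
    and Rpd: "pos_def_on {1..K} (gram A h)"
    and k: "k \<in> {1..K}"
    and U: "unitary_on ({1..K} - {k}) U"
    and eig: "\<And>i j. i \<in> {1..K} - {k} \<Longrightarrow> j \<in> {1..K} - {k} \<Longrightarrow>
               Ck A h P \<sigma>2 i j = (\<Sum>l\<in>{1..K} - {k}. U i l * complex_of_real (lam l) * cnj (U j l))"
    and lpos: "\<And>l. l \<in> {1..K} - {k} \<Longrightarrow> lam l > 0"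
    and wL2: "L2 A w"
  shows "f_dm A ({1..K} - {k}) h P \<sigma>2 w =
         (LINT r|lebesgue_on A.
            (cmod (apply_Bop A ({1..K} - {k}) h P \<sigma>2 (Bk ({1..K} - {k}) U lam) w r))\<^sup>2)"
proof -
  define I where "I = {1..K} - {k}"
  have fin: "finite I" and sub: "I \<subseteq> {1..K}" unfolding I_def by auto
  have Ppos_I: "P i / \<sigma>2 > 0" if "i \<in> I" for i
    using Ppos sigma sub that by auto
  have pd: "pos_def_on I (Ck A h P \<sigma>2)"
    using pos_def_on_Ck[OF Rpd finite_atLeastAtMost sub Ppos_I] .
  have hI: "\<And>i. i \<in> I \<Longrightarrow> L2 A (h i)" using hL2 sub by blast
  define g where "g = scaled_proj A h P \<sigma>2 w"
  define c where "c = (\<lambda>i. \<Sum>j\<in>I. Bk I U lam i j * g j)"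
  have "complex_of_real (f_dm A I h P \<sigma>2 w)
      = complex_of_real (LINT r|lebesgue_on A. (cmod (w r))\<^sup>2) + (\<Sum>i\<in>I. cnj (g i) * g i)"
    unfolding g_def using Ppos_I by (intro f_dm_eq_scaled_proj less_imp_le)
  also have "(\<Sum>i\<in>I. cnj (g i) * g i) = - (\<Sum>j\<in>I. c j * cnj (g j)) - (\<Sum>i\<in>I. cnj (c i) * g i)
      + (\<Sum>i\<in>I. \<Sum>j\<in>I. cnj (c i) * Ck A h P \<sigma>2 i j * c j)"
    unfolding c_def
    by (rule Bk_quadratic_identity[OF fin U[folded I_def] eig[folded I_def] pd lpos[folded I_def],
          symmetric])
  also have "complex_of_real (LINT r|lebesgue_on A. (cmod (w r))\<^sup>2) + \<dots>
      = complex_of_real (LINT r|lebesgue_on A. (cmod (apply_Bop A I h P \<sigma>2 (Bk I U lam) w r))\<^sup>2)"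
    using integral_cmod_apply_Bop_square[OF fin hI wL2]
    unfolding g_def c_def by (simp only: diff_conv_add_uminus add.assoc)
  finally have "complex_of_real (f_dm A I h P \<sigma>2 w)
      = complex_of_real (LINT r|lebesgue_on A. (cmod (apply_Bop A I h P \<sigma>2 (Bk I U lam) w r))\<^sup>2)" .
  then show ?thesis unfolding I_def of_real_eq_iff .
qed

end
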